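(* Let $\varphi,\psi$ be independent random variables uniform on $[0,\pi]$, and set $(\alpha,\beta)=(\varphi,\psi)$ if $\varphi+\psi<\pi$ and $(\alpha,\beta)=(\pi-\psi,\pi-\varphi)$ if $\varphi+\psi>\pi$. Let $T$ be the triangle with vertices $A=(0,0)$, $B=(1,0)$ and \[ C=\left(\frac{\tan\beta}{\tan\alpha+\tan\beta},\frac{\tan\alpha\tan\beta}{\tan\alpha+\tan\beta}\right). \] Let $a=\|B-C\|$ and $b=\|A-C\|$. Then each of the random variables $a$, $b$, $a/b$ and $b/a$ has density \[ \frac{2}{\pi^2}\frac{\ln(1+z)-\ln|1-z|}{z},\qquad z>0. \]
   Context: $\|\cdot\|$ is the Euclidean norm. *)

theory Defs
  imports "HOL-Probability.Probability"
begin

text \<open>The null event phi + psi = pi is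
  assigned to the first branch (irrelevant for distributions).\<close>
definition tri_angles :: "real \<Rightarrow> real \<Rightarrow> real \<times> real" where
  "tri_angles \<phi> \<psi> = (if \<phi> + \<psi> \<le> pi then (\<phi>, \<psi>) else (pi - \<psi>, pi - \<phi>))"

definition tri_A :: "real \<times> real" where "tri_A = (0, 0)"
definition tri_B :: "real \<times> real" where "tri_B = (1, 0)"

definition tri_C :: "real \<Rightarrow> real \<Rightarrow> real \<times> real" where
  "tri_C \<phi> \<psi> = (let (\<alpha>, \<beta>) = tri_angles \<phi> \<psi> in
     (tan \<beta> / (tan \<alpha> + tan \<beta>), tan \<alpha> * tan \<beta> / (tan \<alpha> + tan \<beta>)))"

text \<open>Side lengths a = |BC|, b = |AC| (Euclidean norm on real \<times> real).\<close>
definition side_a :: "real \<Rightarrow> real \<Rightarrow> real" where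
  "side_a \<phi> \<psi> = norm (tri_B - tri_C \<phi> \<psi>)"
definition side_b :: "real \<Rightarrow> real \<Rightarrow> real" where
  "side_b \<phi> \<psi> = norm (tri_A - tri_C \<phi> \<psi>)"

definition side_density :: "real \<Rightarrow> real" where
  "side_density z = (if z > 0 then 2 / pi\<^sup>2 * (ln (1 + z) - ln \<bar>1 - z\<bar>) / z else 0)"

end

theory Submission
  imports Defs
begin

text \<open>By the law of sines, in the triangle with base AB = 1 and angles \<alpha>, \<beta> at A, B we have
  b = sin \<beta> / sin (\<alpha> + \<beta>), a = sin \<alpha> / sin (\<alpha> + \<beta>) and b / a = sin \<beta> / sin (\<gamma> + \<beta>) with
  \<gamma> = pi - \<alpha> - \<beta>.  Folding the square [0, pi] \<times> [0, pi] along its antidiagonal turns the uniform law of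
  (\<phi>, \<psi>) into the uniform law of (\<alpha>, \<beta>) on the simplex \<alpha>, \<beta> \<ge> 0, \<alpha> + \<beta> \<le> pi, which is invariant
  under (\<alpha>, \<beta>) \<mapsto> (\<beta>, \<alpha>) and under (\<alpha>, \<beta>) \<mapsto> (\<gamma>, \<beta>).  Hence a, b, a / b and b / a all have the
  law of q(\<alpha>, \<beta>) = sin \<beta> / sin (\<alpha> + \<beta>).  For fixed \<alpha>, q is increasing in \<beta>, and q \<le> t exactly
  when \<beta> \<le> arctan ((t - cos \<alpha>) / sin \<alpha>) + pi/2 - \<alpha>.  This bound is an antiderivative in t of
  sin \<alpha> / (t^2 - 2 t cos \<alpha> + 1), whose integral over \<alpha> \<in> [0, pi] is (ln (1 + t) - ln \<bar>1 - t\<bar>) / t;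
  Fubini's theorem then identifies the distribution function of q.\<close>

lemma nn_integral_lborel_reflect:
  fixes f :: "real \<Rightarrow> ennreal"
  assumes "f \<in> borel_measurable borel"
  shows "(\<integral>\<^sup>+x. f x \<partial>lborel) = (\<integral>\<^sup>+x. f (t - x) \<partial>lborel)"
  using nn_integral_real_affine[OF assms, of "-1" t] by simp

lemma measure_eqI_atMost:
  fixes M N :: "real measure"
  assumes sets: "sets M = sets borel" "sets N = sets borel"
    and fin: "\<And>x. emeasure M {..x} < \<infinity>"
    and "\<And>x. emeasure M {..x} = emeasure N {..x}"
  shows "M = N"
proof (rule measure_eqI_generator_eq_countable)
  let ?LT = "\<lambda>a::real. {..a}" let ?E = "range ?LT"
  show "Int_stable ?E"
    by (auto simp: Int_stable_def)
  show "?E \<subseteq> Pow UNIV" "sets M = sigma_sets UNIV ?E" "sets N = sigma_sets UNIV ?E"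
    unfolding sets borel_eq_atMost by auto
  show "?LT ` \<rat> \<subseteq> ?E" "(\<Union>i\<in>\<rat>. ?LT i) = UNIV" "\<And>a. a \<in> ?LT ` \<rat> \<Longrightarrow> emeasure M a \<noteq> \<infinity>"
    using fin Rats_no_top_le by (auto simp: less_top)
qed (auto intro: assms countable_rat)

section \<open>Integrals over the simplex of angle pairs\<close>

definition simplex_integral :: "(real \<times> real \<Rightarrow> ennreal) \<Rightarrow> ennreal" where
  "simplex_integral F =
     (\<integral>\<^sup>+x. (\<integral>\<^sup>+y. (if 0 \<le> x \<and> 0 \<le> y \<and> x + y \<le> pi then F (x, y) else 0) \<partial>lborel) \<partial>lborel)"

lemma simplex_integral_swap:
  assumes [measurable]: "F \<in> borel_measurable (lborel \<Otimes>\<^sub>M lborel)"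
  shows "simplex_integral (\<lambda>p. F (snd p, fst p)) = simplex_integral F"
proof -
  have "simplex_integral (\<lambda>p. F (snd p, fst p)) =
      (\<integral>\<^sup>+x. (\<integral>\<^sup>+y. (if 0 \<le> y \<and> 0 \<le> x \<and> y + x \<le> pi then F (y, x) else 0) \<partial>lborel) \<partial>lborel)"
    unfolding simplex_integral_def by (intro nn_integral_cong) (auto simp: add.commute)
  also have "\<dots> = simplex_integral F"
    unfolding simplex_integral_def by (rule lborel_pair.Fubini') measurable
  finally show ?thesis .
qed

lemma simplex_integral_reflect:
  assumes [measurable]: "F \<in> borel_measurable (lborel \<Otimes>\<^sub>M lborel)"
  shows "simplex_integral (\<lambda>p. F (pi - fst p - snd p, snd p)) = simplex_integral F"
proof -
  define A where "A x y = (if 0 \<le> x \<and> 0 \<le> y \<and> x + y \<le> pi then F (x, y) else 0)" for x y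
  define R where "R x y = (if 0 \<le> x \<and> 0 \<le> y \<and> x + y \<le> pi then F (pi - x - y, y) else 0)" for x y
  have [measurable]: "case_prod A \<in> borel_measurable (lborel \<Otimes>\<^sub>M lborel)"
    "case_prod R \<in> borel_measurable (lborel \<Otimes>\<^sub>M lborel)"
    unfolding A_def R_def by measurable
  have section_eq: "(\<integral>\<^sup>+x. A x y \<partial>lborel) = (\<integral>\<^sup>+x. R x y \<partial>lborel)" for y
  proof -
    have "(\<integral>\<^sup>+x. A x y \<partial>lborel) = (\<integral>\<^sup>+x. A ((pi - y) - x) y \<partial>lborel)"
      by (rule nn_integral_lborel_reflect) measurable
    also have "\<dots> = (\<integral>\<^sup>+x. R x y \<partial>lborel)"
      by (intro nn_integral_cong) (auto simp: A_def R_def algebra_simps)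
    finally show ?thesis .
  qed
  have "simplex_integral F = (\<integral>\<^sup>+y. (\<integral>\<^sup>+x. A x y \<partial>lborel) \<partial>lborel)"
    unfolding simplex_integral_def A_def[symmetric] by (rule lborel_pair.Fubini'[symmetric]) measurable
  also have "\<dots> = (\<integral>\<^sup>+y. (\<integral>\<^sup>+x. R x y \<partial>lborel) \<partial>lborel)"
    by (simp add: section_eq)
  also have "\<dots> = simplex_integral (\<lambda>p. F (pi - fst p - snd p, snd p))"
    unfolding simplex_integral_def prod.sel R_def[symmetric] by (rule lborel_pair.Fubini') measurable
  finally show ?thesis ..
qed

lemma simplex_integral_cong_AE:
  assumes "\<And>x y. 0 < x \<Longrightarrow> 0 < y \<Longrightarrow> x + y < pi \<Longrightarrow> x \<noteq> pi/2 \<Longrightarrow> y \<noteq> pi/2 \<Longrightarrow> F (x, y) = G (x, y)"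
  shows "simplex_integral F = simplex_integral G"
  unfolding simplex_integral_def
proof (intro nn_integral_cong_AE)
  have "AE x in lborel. x \<noteq> 0 \<and> x \<noteq> pi/2"
    using AE_lborel_singleton[of 0] AE_lborel_singleton[of "pi/2"] by eventually_elim auto
  then show "AE x in lborel.
      (\<integral>\<^sup>+y. (if 0 \<le> x \<and> 0 \<le> y \<and> x + y \<le> pi then F (x, y) else 0) \<partial>lborel) =
      (\<integral>\<^sup>+y. (if 0 \<le> x \<and> 0 \<le> y \<and> x + y \<le> pi then G (x, y) else 0) \<partial>lborel)"
  proof eventually_elim
    case (elim x)
    have "AE y in lborel. y \<noteq> 0 \<and> y \<noteq> pi/2 \<and> y \<noteq> pi - x"
      using AE_lborel_singleton[of 0] AE_lborel_singleton[of "pi/2"] AE_lborel_singleton[of "pi - x"]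
      by eventually_elim auto
    then show ?case
      by (intro nn_integral_cong_AE, eventually_elim) (use assms[of x] elim in auto)
  qed
qed

lemma nn_integral_reflected_upper_triangle:
  assumes [measurable]: "F \<in> borel_measurable (lborel \<Otimes>\<^sub>M lborel)"
  shows "(\<integral>\<^sup>+x. (\<integral>\<^sup>+y. (if 0 \<le> x \<and> x \<le> pi \<and> 0 \<le> y \<and> y \<le> pi \<and> x + y > pi
      then F (pi - y, pi - x) else 0) \<partial>lborel) \<partial>lborel) = simplex_integral F"
proof -
  define A where "A x y = (if 0 \<le> x \<and> 0 \<le> y \<and> x + y \<le> pi then F (x, y) else 0)" for x y
  define B where "B x y = (if 0 \<le> x \<and> x \<le> pi \<and> 0 \<le> y \<and> y \<le> pi \<and> x + y > pi
    then F (pi - y, pi - x) else 0)" for x y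
  have [measurable]: "case_prod A \<in> borel_measurable (lborel \<Otimes>\<^sub>M lborel)"
    "case_prod B \<in> borel_measurable (lborel \<Otimes>\<^sub>M lborel)"
    unfolding A_def B_def by measurable
  have B_reflected: "(\<integral>\<^sup>+y. B x y \<partial>lborel) = (\<integral>\<^sup>+y. A y (pi - x) \<partial>lborel)" for x
  proof -
    have "(\<integral>\<^sup>+y. B x y \<partial>lborel) = (\<integral>\<^sup>+y. B x (pi - y) \<partial>lborel)"
      by (rule nn_integral_lborel_reflect) measurable
    also have "\<dots> = (\<integral>\<^sup>+y. A y (pi - x) \<partial>lborel)"
      using AE_lborel_singleton[of x]
      by (intro nn_integral_cong_AE, eventually_elim) (auto simp: A_def B_def)
    finally show ?thesis .
  qed
  have "(\<integral>\<^sup>+x. (\<integral>\<^sup>+y. B x y \<partial>lborel) \<partial>lborel) = (\<integral>\<^sup>+x. (\<integral>\<^sup>+y. A y (pi - x) \<partial>lborel) \<partial>lborel)"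
    by (simp add: B_reflected)
  also have "\<dots> = (\<integral>\<^sup>+x. (\<integral>\<^sup>+y. A y x \<partial>lborel) \<partial>lborel)"
    by (rule nn_integral_lborel_reflect[symmetric]) measurable
  also have "\<dots> = simplex_integral F"
    unfolding simplex_integral_def A_def[symmetric] by (rule lborel_pair.Fubini'[symmetric]) measurable
  finally show ?thesis
    unfolding B_def .
qed

text \<open>Folding the square [0, pi] \<times> [0, pi] along the line x + y = pi.\<close>

lemma nn_integral_square_tri_angles:
  assumes [measurable]: "F \<in> borel_measurable (lborel \<Otimes>\<^sub>M lborel)"
  shows "(\<integral>\<^sup>+x. (\<integral>\<^sup>+y. (if 0 \<le> x \<and> x \<le> pi \<and> 0 \<le> y \<and> y \<le> pi then F (tri_angles x y) else 0)
      \<partial>lborel) \<partial>lborel) = 2 * simplex_integral F"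
proof -
  define A where "A x y = (if 0 \<le> x \<and> 0 \<le> y \<and> x + y \<le> pi then F (x, y) else 0)" for x y
  define B where "B x y = (if 0 \<le> x \<and> x \<le> pi \<and> 0 \<le> y \<and> y \<le> pi \<and> x + y > pi
    then F (pi - y, pi - x) else 0)" for x y
  have [measurable]: "case_prod A \<in> borel_measurable (lborel \<Otimes>\<^sub>M lborel)"
    "case_prod B \<in> borel_measurable (lborel \<Otimes>\<^sub>M lborel)"
    unfolding A_def B_def by measurable
  have "(\<integral>\<^sup>+x. (\<integral>\<^sup>+y. (if 0 \<le> x \<and> x \<le> pi \<and> 0 \<le> y \<and> y \<le> pi then F (tri_angles x y) else 0)
      \<partial>lborel) \<partial>lborel) = (\<integral>\<^sup>+x. (\<integral>\<^sup>+y. A x y \<partial>lborel) + (\<integral>\<^sup>+y. B x y \<partial>lborel) \<partial>lborel)"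
    by (intro nn_integral_cong, subst nn_integral_add[symmetric])
      (auto intro!: nn_integral_cong simp: A_def B_def tri_angles_def)
  also have "\<dots> = (\<integral>\<^sup>+x. (\<integral>\<^sup>+y. A x y \<partial>lborel) \<partial>lborel) + (\<integral>\<^sup>+x. (\<integral>\<^sup>+y. B x y \<partial>lborel) \<partial>lborel)"
    by (intro nn_integral_add) measurable
  also have "\<dots> = 2 * simplex_integral F"
    unfolding B_def nn_integral_reflected_upper_triangle[OF assms]
    by (simp add: simplex_integral_def A_def mult_2)
  finally show ?thesis .
qed

section \<open>The distribution function of sin \<beta> / sin (\<alpha> + \<beta>)\<close>

definition sine_ratio :: "real \<times> real \<Rightarrow> real" where
  "sine_ratio p = sin (snd p) / sin (fst p + snd p)"

text \<open>For fixed x, the value of y with sine_ratio (x, y) = t.\<close>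

definition ratio_level :: "real \<Rightarrow> real \<Rightarrow> real" where
  "ratio_level x t = arctan ((t - cos x) / sin x) + pi/2 - x"

definition ratio_kernel :: "real \<Rightarrow> real \<Rightarrow> real" where
  "ratio_kernel x z = sin x / (z\<^sup>2 - 2 * z * cos x + 1)"

definition side_cdf :: "real \<Rightarrow> ennreal" where
  "side_cdf t = (\<integral>\<^sup>+z. ennreal (side_density z) * indicator {..t} z \<partial>lborel)"

lemma sine_ratio_measurable [measurable]: "sine_ratio \<in> borel_measurable (lborel \<Otimes>\<^sub>M lborel)"
  unfolding sine_ratio_def by measurable

lemma sine_ratio_pos:
  assumes "0 < x" "0 < y" "x + y < pi"
  shows "sine_ratio (x, y) > 0"
  using assms by (simp add: sine_ratio_def sin_gt_zero)

lemma sine_ratio_strict_mono: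
  assumes "0 < x" "0 \<le> y1" "y1 < y2" "x + y2 < pi"
  shows "sine_ratio (x, y1) < sine_ratio (x, y2)"
proof -
  have pos: "sin (x + y1) > 0" "sin (x + y2) > 0"
    using assms by (auto intro: sin_gt_zero)
  have "sin y2 * sin (x + y1) - sin y1 * sin (x + y2) = sin x * sin (y2 - y1)"
    by (simp add: sin_add sin_diff algebra_simps)
  also have "\<dots> > 0"
    using assms by (intro mult_pos_pos sin_gt_zero) auto
  finally show ?thesis
    using pos by (simp add: sine_ratio_def field_simps)
qed

lemma arctan_neg_cot:
  assumes "0 < x" "x < pi"
  shows "arctan (- cos x / sin x) = x - pi/2"
proof -
  have "tan (x - pi/2) = - cos x / sin x"
    by (simp add: tan_def sin_diff cos_diff)
  then show ?thesis
    using arctan_tan[of "x - pi/2"] assms by simp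
qed

lemma ratio_level_bounds:
  assumes "0 < x" "x < pi" "0 < t"
  shows "0 < ratio_level x t" "ratio_level x t < pi - x"
proof -
  have "sin x > 0"
    using assms by (intro sin_gt_zero) auto
  then have "- cos x / sin x < (t - cos x) / sin x"
    using assms by (simp add: diff_divide_distrib)
  then have "arctan (- cos x / sin x) < arctan ((t - cos x) / sin x)"
    unfolding arctan_less_iff .
  then show "0 < ratio_level x t"
    unfolding arctan_neg_cot[OF assms(1,2)] ratio_level_def by simp
  show "ratio_level x t < pi - x"
    using arctan_ubound[of "(t - cos x) / sin x"] by (simp add: ratio_level_def)
qed

lemma sine_ratio_ratio_level:
  assumes "0 < x" "x < pi"
  shows "sine_ratio (x, ratio_level x t) = t"
proof -
  define \<theta> where "\<theta> = arctan ((t - cos x) / sin x)"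
  have "sin x > 0"
    using assms by (intro sin_gt_zero) auto
  have "cos \<theta> > 0"
    using arctan_bounded[of "(t - cos x) / sin x"] by (intro cos_gt_zero_pi) (auto simp: \<theta>_def)
  have tan_\<theta>: "sin \<theta> / cos \<theta> = (t - cos x) / sin x"
    using tan_arctan by (simp add: \<theta>_def tan_def)
  have "sine_ratio (x, ratio_level x t) = sin (\<theta> + pi/2 - x) / sin (\<theta> + pi/2)"
    by (simp add: sine_ratio_def ratio_level_def \<theta>_def)
  also have "\<dots> = (cos \<theta> * cos x + sin \<theta> * sin x) / cos \<theta>"
    by (simp add: sin_add cos_add sin_diff cos_diff)
  also have "\<dots> = cos x + (sin \<theta> / cos \<theta>) * sin x"
    using \<open>cos \<theta> > 0\<close> by (simp add: field_simps)
  also have "\<dots> = t"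
    using \<open>sin x > 0\<close> by (simp add: tan_\<theta>)
  finally show ?thesis .
qed

lemma sine_ratio_le_iff:
  assumes "0 < x" "x < pi" "0 < t" "0 \<le> y" "x + y < pi"
  shows "sine_ratio (x, y) \<le> t \<longleftrightarrow> y \<le> ratio_level x t"
proof
  assume "sine_ratio (x, y) \<le> t"
  show "y \<le> ratio_level x t"
  proof (rule ccontr)
    assume "\<not> y \<le> ratio_level x t"
    then have "sine_ratio (x, ratio_level x t) < sine_ratio (x, y)"
      using ratio_level_bounds[OF assms(1-3)] assms by (intro sine_ratio_strict_mono) auto
    then show False
      using \<open>sine_ratio (x, y) \<le> t\<close> sine_ratio_ratio_level[OF assms(1,2)] by simp
  qed
next
  assume "y \<le> ratio_level x t"
  then have "sine_ratio (x, y) \<le> sine_ratio (x, ratio_level x t)"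
    using sine_ratio_strict_mono[of x y "ratio_level x t"] ratio_level_bounds[OF assms(1-3)] assms
    by (cases "y = ratio_level x t") auto
  then show "sine_ratio (x, y) \<le> t"
    using sine_ratio_ratio_level[OF assms(1,2)] by simp
qed

lemma nn_integral_sine_ratio_section:
  assumes "0 < x" "x < pi"
  shows "(\<integral>\<^sup>+y. (if 0 \<le> y \<and> x + y \<le> pi then indicator {..t} (sine_ratio (x, y)) else 0) \<partial>lborel)
    = (if t > 0 then ennreal (ratio_level x t) else 0)"
proof (cases "t > 0")
  case True
  have "AE y in lborel. (if 0 \<le> y \<and> x + y \<le> pi then indicator {..t} (sine_ratio (x, y)) else 0)
      = (indicator {0..ratio_level x t} y :: ennreal)"
    using AE_lborel_singleton[of "pi - x"]
    by eventually_elim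
      (use assms ratio_level_bounds[OF assms True] sine_ratio_le_iff[OF assms True] in
        \<open>auto simp: indicator_def\<close>)
  then show ?thesis
    using ratio_level_bounds[OF assms True] True by (simp add: nn_integral_cong_AE)
next
  case False
  have "AE y in lborel. (if 0 \<le> y \<and> x + y \<le> pi then indicator {..t} (sine_ratio (x, y)) else 0)
      = (0 :: ennreal)"
    using AE_lborel_singleton[of "pi - x"] AE_lborel_singleton[of 0]
  proof eventually_elim
    case (elim y)
    show ?case
    proof (cases "0 < y \<and> x + y < pi")
      case True
      then have "t < sine_ratio (x, y)"
        using sine_ratio_pos[of x y] assms False by simp
      then show ?thesis
        by simp
    next
      case False
      then show ?thesis
        using elim by auto
    qed
  qed
  then show ?thesis
    using False by (simp add: nn_integral_cong_AE)
qed

lemma simplex_integral_sine_ratio_le: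
  "simplex_integral (\<lambda>p. indicator {..t} (sine_ratio p)) =
     (\<integral>\<^sup>+x. (if t > 0 then ennreal (ratio_level x t) else 0) * indicator {0<..<pi} x \<partial>lborel)"
  unfolding simplex_integral_def
proof (intro nn_integral_cong_AE)
  show "AE x in lborel.
      (\<integral>\<^sup>+y. (if 0 \<le> x \<and> 0 \<le> y \<and> x + y \<le> pi then indicator {..t} (sine_ratio (x, y)) else 0) \<partial>lborel)
      = (if t > 0 then ennreal (ratio_level x t) else 0) * indicator {0<..<pi} x"
    using AE_lborel_singleton[of 0] AE_lborel_singleton[of pi]
  proof eventually_elim
    case (elim x)
    show ?case
    proof (cases "0 < x \<and> x < pi")
      case True
      then show ?thesis
        using nn_integral_sine_ratio_section[of x t] by simp
    next
      case False
      then have "x < 0 \<or> pi < x"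
        using elim by auto
      then show ?thesis
        using False by (auto intro: nn_integral_zero')
    qed
  qed
qed

lemma ratio_kernel_denominator:
  fixes x z :: real
  shows "z\<^sup>2 - 2 * z * cos x + 1 = (z - cos x)\<^sup>2 + (sin x)\<^sup>2"
  using sin_cos_squared_add[of x] by (simp add: power2_eq_square algebra_simps)

lemma ratio_kernel_nonneg:
  fixes x z :: real
  shows "0 \<le> sin x \<Longrightarrow> 0 \<le> ratio_kernel x z"
  by (simp add: ratio_kernel_def ratio_kernel_denominator)

lemma has_real_derivative_ratio_level:
  assumes "sin x > 0"
  shows "((\<lambda>t. ratio_level x t) has_real_derivative ratio_kernel x t) (at t)"
proof -
  have "(t - cos x)\<^sup>2 + (sin x)\<^sup>2 > 0"
    using assms by (simp add: add_nonneg_pos)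
  then have "inverse (1 + ((t - cos x) / sin x)\<^sup>2) * (1 / sin x) = ratio_kernel x t"
    using assms unfolding ratio_kernel_def ratio_kernel_denominator
    by (simp add: field_simps power2_eq_square)
  then show ?thesis
    unfolding ratio_level_def using assms by (auto intro!: derivative_eq_intros)
qed

lemma has_real_derivative_ln_ratio_kernel_denominator:
  assumes "0 < z" "z \<noteq> 1"
  shows "((\<lambda>x. ln (z\<^sup>2 - 2 * z * cos x + 1) / (2 * z)) has_real_derivative ratio_kernel x z) (at x)"
proof -
  have "z\<^sup>2 - 2 * z * cos x + 1 \<noteq> 0"
  proof
    assume "z\<^sup>2 - 2 * z * cos x + 1 = 0"
    then have "z = cos x" "sin x = 0"
      unfolding ratio_kernel_denominator sum_power2_eq_zero_iff by simp_all
    then have "z\<^sup>2 = 1"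
      using sin_cos_squared_add[of x] by simp
    with assms show False
      by (simp add: power2_eq_1_iff)
  qed
  then have pos: "z\<^sup>2 - 2 * z * cos x + 1 > 0"
    unfolding ratio_kernel_denominator by (simp add: order_less_le)
  have "inverse d * (2 * z * s) / (2 * z) = s / d" for d s :: real
    using assms by (simp add: field_simps)
  then have kernel_eq:
    "inverse (z\<^sup>2 - 2 * z * cos x + 1) * (2 * z * sin x) / (2 * z) = ratio_kernel x z"
    by (simp add: ratio_kernel_def)
  have "((\<lambda>x. z\<^sup>2 - 2 * z * cos x + 1) has_real_derivative 2 * z * sin x) (at x)"
    by (auto intro!: derivative_eq_intros)
  from DERIV_cdivide[OF DERIV_chain2[OF DERIV_ln[OF pos] this], of "2 * z"] show ?thesis
    by (simp only: kernel_eq)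
qed

lemma nn_integral_ratio_kernel_dz:
  assumes "0 < x" "x < pi" "0 \<le> t"
  shows "(\<integral>\<^sup>+z. ennreal (ratio_kernel x z) * indicator {0..t} z \<partial>lborel) = ennreal (ratio_level x t)"
proof -
  have "sin x > 0"
    using assms by (intro sin_gt_zero) auto
  then have "(\<integral>\<^sup>+z. ennreal (ratio_kernel x z) * indicator {0..t} z \<partial>lborel)
      = ennreal (ratio_level x t - ratio_level x 0)"
    using assms by (intro nn_integral_FTC_Icc has_real_derivative_ratio_level ratio_kernel_nonneg)
      (auto simp: ratio_kernel_def)
  also have "ratio_level x 0 = 0"
    using arctan_neg_cot[OF assms(1,2)] by (simp add: ratio_level_def)
  finally show ?thesis
    by simp
qed

lemma nn_integral_ratio_kernel_dx:
  assumes "0 < z" "z \<noteq> 1"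
  shows "(\<integral>\<^sup>+x. ennreal (ratio_kernel x z) * indicator {0..pi} x \<partial>lborel)
    = ennreal ((ln (1 + z) - ln \<bar>1 - z\<bar>) / z)"
proof -
  define L where "L x = ln (z\<^sup>2 - 2 * z * cos x + 1) / (2 * z)" for x
  have "(\<integral>\<^sup>+x. ennreal (ratio_kernel x z) * indicator {0..pi} x \<partial>lborel) = ennreal (L pi - L 0)"
    unfolding L_def
    by (intro nn_integral_FTC_Icc has_real_derivative_ln_ratio_kernel_denominator
        ratio_kernel_nonneg sin_ge_zero)
      (use assms in \<open>auto simp: ratio_kernel_def\<close>)
  also have "L pi - L 0 = (ln ((1 + z)\<^sup>2) - ln (\<bar>1 - z\<bar>\<^sup>2)) / (2 * z)"
  proof -
    have "z\<^sup>2 - 2 * z * cos pi + 1 = (1 + z)\<^sup>2" "z\<^sup>2 - 2 * z * cos 0 + 1 = \<bar>1 - z\<bar>\<^sup>2"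
      by (simp_all add: power2_eq_square algebra_simps)
    then show ?thesis
      unfolding L_def by (simp add: diff_divide_distrib)
  qed
  also have "\<dots> = (ln (1 + z) - ln \<bar>1 - z\<bar>) / z"
    using assms ln_realpow[of "1 + z" 2] ln_realpow[of "\<bar>1 - z\<bar>" 2] by (simp add: field_simps)
  finally show ?thesis .
qed

lemma nn_integral_ratio_kernel_Fubini:
  "(\<integral>\<^sup>+z. (\<integral>\<^sup>+x. ennreal (ratio_kernel x z) * indicator {0..pi} x \<partial>lborel) * indicator {0..t} z \<partial>lborel)
   = (\<integral>\<^sup>+x. (\<integral>\<^sup>+z. ennreal (ratio_kernel x z) * indicator {0..t} z \<partial>lborel) * indicator {0..pi} x \<partial>lborel)"
proof -
  define G where "G x z = ennreal (ratio_kernel x z) * indicator {0..t} z * indicator {0..pi} x" for x z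
  have [measurable]: "case_prod G \<in> borel_measurable (lborel \<Otimes>\<^sub>M lborel)"
    unfolding G_def ratio_kernel_def by measurable
  have "(\<integral>\<^sup>+x. G x z \<partial>lborel)
      = (\<integral>\<^sup>+x. ennreal (ratio_kernel x z) * indicator {0..pi} x \<partial>lborel) * indicator {0..t} z" for z
    unfolding G_def by (subst nn_integral_multc[symmetric]) (auto simp: ac_simps ratio_kernel_def)
  moreover have "(\<integral>\<^sup>+z. G x z \<partial>lborel)
      = (\<integral>\<^sup>+z. ennreal (ratio_kernel x z) * indicator {0..t} z \<partial>lborel) * indicator {0..pi} x" for x
    unfolding G_def by (subst nn_integral_multc[symmetric]) (auto simp: ratio_kernel_def)
  moreover have "(\<integral>\<^sup>+z. (\<integral>\<^sup>+x. G x z \<partial>lborel) \<partial>lborel) = (\<integral>\<^sup>+x. (\<integral>\<^sup>+z. G x z \<partial>lborel) \<partial>lborel)"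
    by (rule lborel_pair.Fubini') measurable
  ultimately show ?thesis
    by simp
qed

lemma side_cdf_eq_ratio_level:
  assumes "0 < t"
  shows "side_cdf t = ennreal (2 / pi\<^sup>2) * (\<integral>\<^sup>+x. ennreal (ratio_level x t) * indicator {0<..<pi} x \<partial>lborel)"
proof -
  have dx: "AE z in lborel. ennreal (side_density z) * indicator {..t} z = ennreal (2 / pi\<^sup>2) *
      ((\<integral>\<^sup>+x. ennreal (ratio_kernel x z) * indicator {0..pi} x \<partial>lborel) * indicator {0..t} z)"
    using AE_lborel_singleton[of 0] AE_lborel_singleton[of 1]
  proof eventually_elim
    case (elim z)
    show ?case
    proof (cases "0 < z \<and> z \<le> t")
      case True
      then show ?thesis
        using elim by (simp add: nn_integral_ratio_kernel_dx side_density_def ennreal_mult'[symmetric])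
    next
      case False
      then show ?thesis
        using elim by (auto simp: side_density_def indicator_def)
    qed
  qed
  have dz: "AE x in lborel.
      (\<integral>\<^sup>+z. ennreal (ratio_kernel x z) * indicator {0..t} z \<partial>lborel) * indicator {0..pi} x
      = ennreal (ratio_level x t) * indicator {0<..<pi} x"
    using AE_lborel_singleton[of 0] AE_lborel_singleton[of pi]
  proof eventually_elim
    case (elim x)
    show ?case
    proof (cases "0 < x \<and> x < pi")
      case True
      then show ?thesis
        using assms by (simp add: nn_integral_ratio_kernel_dz)
    next
      case False
      then show ?thesis
        using elim by (auto simp: indicator_def)
    qed
  qed
  have "side_cdf t = ennreal (2 / pi\<^sup>2) *
      (\<integral>\<^sup>+z. (\<integral>\<^sup>+x. ennreal (ratio_kernel x z) * indicator {0..pi} x \<partial>lborel) * indicator {0..t} z \<partial>lborel)"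
    unfolding side_cdf_def using dx
    by (subst nn_integral_cmult[symmetric]) (auto simp: ratio_kernel_def intro: nn_integral_cong_AE)
  also have "\<dots> = ennreal (2 / pi\<^sup>2) * (\<integral>\<^sup>+x. ennreal (ratio_level x t) * indicator {0<..<pi} x \<partial>lborel)"
    unfolding nn_integral_ratio_kernel_Fubini using dz by (simp add: nn_integral_cong_AE)
  finally show ?thesis .
qed

text \<open>The uniform law on the simplex has density 2 / pi^2.\<close>

lemma simplex_integral_sine_ratio_le_eq_side_cdf:
  "ennreal (2 / pi\<^sup>2) * simplex_integral (\<lambda>p. indicator {..t} (sine_ratio p)) = side_cdf t"
proof (cases "t > 0")
  case True
  then show ?thesis
    by (simp add: simplex_integral_sine_ratio_le side_cdf_eq_ratio_level)
next
  case False
  then have "side_cdf t = (\<integral>\<^sup>+(z::real). 0 \<partial>lborel)"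
    unfolding side_cdf_def by (intro nn_integral_cong) (auto simp: side_density_def indicator_def not_less)
  then show ?thesis
    using False by (simp add: simplex_integral_sine_ratio_le)
qed

section \<open>The sides of the triangle as functions of its angles\<close>

definition apex_of_angles :: "real \<times> real \<Rightarrow> real \<times> real" where
  "apex_of_angles p = (tan (snd p) / (tan (fst p) + tan (snd p)),
     tan (fst p) * tan (snd p) / (tan (fst p) + tan (snd p)))"

definition side_a_of_angles :: "real \<times> real \<Rightarrow> real" where
  "side_a_of_angles p = norm (tri_B - apex_of_angles p)"

definition side_b_of_angles :: "real \<times> real \<Rightarrow> real" where
  "side_b_of_angles p = norm (tri_A - apex_of_angles p)"

lemma side_a_eq_side_a_of_angles: "side_a x y = side_a_of_angles (tri_angles x y)"
  by (simp add: side_a_def side_a_of_angles_def tri_C_def apex_of_angles_def split: prod.split)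

lemma side_b_eq_side_b_of_angles: "side_b x y = side_b_of_angles (tri_angles x y)"
  by (simp add: side_b_def side_b_of_angles_def tri_C_def apex_of_angles_def split: prod.split)

lemma side_a_of_angles_measurable [measurable]:
  "side_a_of_angles \<in> borel_measurable (lborel \<Otimes>\<^sub>M lborel)"
proof -
  have eq: "side_a_of_angles = (\<lambda>p. sqrt ((1 - fst (apex_of_angles p))\<^sup>2 + (snd (apex_of_angles p))\<^sup>2))"
    unfolding side_a_of_angles_def tri_B_def by (simp add: fun_eq_iff norm_prod_def)
  show ?thesis
    unfolding eq apex_of_angles_def tan_def by measurable
qed

lemma side_b_of_angles_measurable [measurable]:
  "side_b_of_angles \<in> borel_measurable (lborel \<Otimes>\<^sub>M lborel)"
proof -
  have eq: "side_b_of_angles = (\<lambda>p. sqrt ((fst (apex_of_angles p))\<^sup>2 + (snd (apex_of_angles p))\<^sup>2))"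
    unfolding side_b_of_angles_def tri_A_def by (simp add: fun_eq_iff norm_prod_def)
  show ?thesis
    unfolding eq apex_of_angles_def tan_def by measurable
qed

lemma tri_angles_measurable [measurable]:
  "(\<lambda>p. tri_angles (fst p) (snd p)) \<in> measurable (lborel \<Otimes>\<^sub>M lborel) (lborel \<Otimes>\<^sub>M lborel)"
  unfolding tri_angles_def by measurable

lemma cos_nonzero_0_pi:
  assumes "0 < x" "x < pi" "x \<noteq> pi/2"
  shows "cos x \<noteq> 0"
  using cos_inj_pi[of x "pi/2"] assms by auto

lemma norm_polar: "0 \<le> r \<Longrightarrow> norm (r * cos x, r * sin x) = r"
  by (simp add: norm_Pair power_mult_distrib flip: distrib_left)

lemma apex_of_angles_polar:
  assumes "0 < x" "0 < y" "x + y < pi" "x \<noteq> pi/2" "y \<noteq> pi/2"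
  shows "apex_of_angles (x, y) = (sine_ratio (x, y) * cos x, sine_ratio (x, y) * sin x)"
proof -
  have "cos x \<noteq> 0" "cos y \<noteq> 0"
    using cos_nonzero_0_pi[of x] cos_nonzero_0_pi[of y] assms by auto
  moreover have "sin (x + y) > 0"
    using assms by (intro sin_gt_zero) auto
  ultimately have "tan y / (tan x + tan y) = sin y / sin (x + y) * cos x"
    "tan x * tan y / (tan x + tan y) = sin y / sin (x + y) * sin x"
    by (simp_all add: add_tan_eq) (simp_all add: tan_def field_simps)
  then show ?thesis
    by (simp add: apex_of_angles_def sine_ratio_def)
qed

text \<open>The law of sines for the triangle with angles x at A and y at B.\<close>

lemma side_b_of_angles_eq_sine_ratio:
  assumes "0 < x" "0 < y" "x + y < pi" "x \<noteq> pi/2" "y \<noteq> pi/2"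
  shows "side_b_of_angles (x, y) = sine_ratio (x, y)"
proof -
  have "side_b_of_angles (x, y) = norm (apex_of_angles (x, y))"
    unfolding side_b_of_angles_def tri_A_def by (metis diff_0 norm_minus_cancel zero_prod_def)
  also have "\<dots> = sine_ratio (x, y)"
    using sine_ratio_pos[of x y] assms by (simp add: apex_of_angles_polar norm_polar)
  finally show ?thesis .
qed

lemma side_a_of_angles_eq_sine_ratio:
  assumes "0 < x" "0 < y" "x + y < pi" "x \<noteq> pi/2" "y \<noteq> pi/2"
  shows "side_a_of_angles (x, y) = sine_ratio (y, x)"
proof -
  have "sin (x + y) > 0"
    using assms by (intro sin_gt_zero) auto
  then have "1 - sin y / sin (x + y) * cos x = sin x / sin (x + y) * cos y"
    by (simp add: field_simps sin_add)
  then have "tri_B - apex_of_angles (x, y) = (sine_ratio (y, x) * cos (-y), sine_ratio (y, x) * sin (-y))"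
    unfolding apex_of_angles_polar[OF assms] tri_B_def sine_ratio_def
    by (simp add: add_ac)
  moreover have "sine_ratio (y, x) \<ge> 0"
    using sine_ratio_pos[of y x] assms by simp
  ultimately show ?thesis
    by (simp only: side_a_of_angles_def norm_polar)
qed

lemma side_ratio_eq_sine_ratio:
  assumes "0 < x" "0 < y" "x + y < pi" "x \<noteq> pi/2" "y \<noteq> pi/2"
  shows "side_b_of_angles (x, y) / side_a_of_angles (x, y) = sine_ratio (pi - x - y, y)"
proof -
  have "sin (x + y) > 0" "sin (y + x) = sin (x + y)"
    using assms by (auto intro: sin_gt_zero simp: add.commute)
  then have "side_b_of_angles (x, y) / side_a_of_angles (x, y) = sin y / sin x"
    using assms by (simp add: side_a_of_angles_eq_sine_ratio side_b_of_angles_eq_sine_ratio sine_ratio_def)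
  also have "\<dots> = sine_ratio (pi - x - y, y)"
    by (simp add: sine_ratio_def)
  finally show ?thesis .
qed

lemma simplex_integral_side_b_le:
  "simplex_integral (\<lambda>p. indicator {..t} (side_b_of_angles p))
     = simplex_integral (\<lambda>p. indicator {..t} (sine_ratio p))"
  by (rule simplex_integral_cong_AE) (simp add: side_b_of_angles_eq_sine_ratio)

lemma simplex_integral_side_a_le:
  "simplex_integral (\<lambda>p. indicator {..t} (side_a_of_angles p))
     = simplex_integral (\<lambda>p. indicator {..t} (sine_ratio p))"
proof -
  have "simplex_integral (\<lambda>p. indicator {..t} (side_a_of_angles p))
      = simplex_integral (\<lambda>p. indicator {..t} (sine_ratio (snd p, fst p)))"
    by (rule simplex_integral_cong_AE) (simp add: side_a_of_angles_eq_sine_ratio)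
  also have "\<dots> = simplex_integral (\<lambda>p. indicator {..t} (sine_ratio p))"
    by (rule simplex_integral_swap[where F = "\<lambda>p. indicator {..t} (sine_ratio p)"]) measurable
  finally show ?thesis .
qed

lemma simplex_integral_side_ratio_le:
  "simplex_integral (\<lambda>p. indicator {..t} (side_b_of_angles p / side_a_of_angles p))
     = simplex_integral (\<lambda>p. indicator {..t} (sine_ratio p))"
proof -
  have "simplex_integral (\<lambda>p. indicator {..t} (side_b_of_angles p / side_a_of_angles p))
      = simplex_integral (\<lambda>p. indicator {..t} (sine_ratio (pi - fst p - snd p, snd p)))"
    by (rule simplex_integral_cong_AE) (simp add: side_ratio_eq_sine_ratio)
  also have "\<dots> = simplex_integral (\<lambda>p. indicator {..t} (sine_ratio p))"
    by (rule simplex_integral_reflect[where F = "\<lambda>p. indicator {..t} (sine_ratio p)"]) measurable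
  finally show ?thesis .
qed

lemma simplex_integral_inverse_side_ratio_le:
  "simplex_integral (\<lambda>p. indicator {..t} (side_a_of_angles p / side_b_of_angles p))
     = simplex_integral (\<lambda>p. indicator {..t} (sine_ratio p))"
proof -
  have swap: "side_a_of_angles (x, y) / side_b_of_angles (x, y)
      = side_b_of_angles (y, x) / side_a_of_angles (y, x)"
    if "0 < x" "0 < y" "x + y < pi" "x \<noteq> pi/2" "y \<noteq> pi/2" for x y
    using that side_a_of_angles_eq_sine_ratio[of x y] side_a_of_angles_eq_sine_ratio[of y x]
      side_b_of_angles_eq_sine_ratio[of x y] side_b_of_angles_eq_sine_ratio[of y x]
    by simp
  have "simplex_integral (\<lambda>p. indicator {..t} (side_a_of_angles p / side_b_of_angles p))
      = simplex_integral (\<lambda>p. indicator {..t} (side_b_of_angles (snd p, fst p) / side_a_of_angles (snd p, fst p)))"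
    by (rule simplex_integral_cong_AE) (simp add: swap)
  also have "\<dots> = simplex_integral (\<lambda>p. indicator {..t} (side_b_of_angles p / side_a_of_angles p))"
    by (rule simplex_integral_swap[where F = "\<lambda>p. indicator {..t} (side_b_of_angles p / side_a_of_angles p)"])
      measurable
  finally show ?thesis
    by (simp only: simplex_integral_side_ratio_le)
qed

section \<open>Transfer to the random angles\<close>

lemma emeasure_tri_angles_le:
  fixes H :: "real \<times> real \<Rightarrow> real"
  assumes J: "distributed M (lborel \<Otimes>\<^sub>M lborel) (\<lambda>\<omega>. (\<phi> \<omega>, \<psi> \<omega>))
      (\<lambda>(x, y). ennreal (indicator {0..pi} x / pi) * ennreal (indicator {0..pi} y / pi))"
    and [measurable]: "H \<in> borel_measurable (lborel \<Otimes>\<^sub>M lborel)"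
  shows "emeasure M {\<omega> \<in> space M. H (tri_angles (\<phi> \<omega>) (\<psi> \<omega>)) \<le> t}
    = ennreal (2 / pi\<^sup>2) * simplex_integral (\<lambda>p. indicator {..t} (H p))"
proof -
  define S where "S = {p. H (tri_angles (fst p) (snd p)) \<le> t}"
  define Q where "Q x y = (if 0 \<le> x \<and> x \<le> pi \<and> 0 \<le> y \<and> y \<le> pi
    then indicator {..t} (H (tri_angles x y)) else 0 :: ennreal)" for x y
  have H_angles: "(\<lambda>p. H (tri_angles (fst p) (snd p))) \<in> borel_measurable (lborel \<Otimes>\<^sub>M lborel)"
    by measurable
  have "S = (\<lambda>p. H (tri_angles (fst p) (snd p))) -` {..t} \<inter> space (lborel \<Otimes>\<^sub>M lborel)"
    by (auto simp: S_def space_pair_measure)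
  also have "\<dots> \<in> sets (lborel \<Otimes>\<^sub>M lborel)"
    by (rule measurable_sets[OF H_angles]) simp
  finally have S_sets [measurable]: "S \<in> sets (lborel \<Otimes>\<^sub>M lborel)" .
  have [measurable]: "case_prod Q \<in> borel_measurable (lborel \<Otimes>\<^sub>M lborel)"
    unfolding Q_def by measurable
  have "{\<omega> \<in> space M. H (tri_angles (\<phi> \<omega>) (\<psi> \<omega>)) \<le> t} = (\<lambda>\<omega>. (\<phi> \<omega>, \<psi> \<omega>)) -` S \<inter> space M"
    by (auto simp: S_def)
  then have "emeasure M {\<omega> \<in> space M. H (tri_angles (\<phi> \<omega>) (\<psi> \<omega>)) \<le> t}
      = (\<integral>\<^sup>+p. (\<lambda>(x, y). ennreal (indicator {0..pi} x / pi) * ennreal (indicator {0..pi} y / pi)) p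
          * indicator S p \<partial>(lborel \<Otimes>\<^sub>M lborel))"
    using distributed_emeasure[OF J S_sets] by simp
  also have "\<dots> = (\<integral>\<^sup>+p. ennreal (1 / pi\<^sup>2) * case_prod Q p \<partial>(lborel \<Otimes>\<^sub>M lborel))"
    by (intro nn_integral_cong)
      (auto simp: Q_def S_def indicator_def ennreal_mult[symmetric] power2_eq_square)
  also have "\<dots> = ennreal (1 / pi\<^sup>2) * (\<integral>\<^sup>+x. (\<integral>\<^sup>+y. Q x y \<partial>lborel) \<partial>lborel)"
    by (simp add: nn_integral_cmult lborel.nn_integral_fst[symmetric])
  also have "(\<integral>\<^sup>+x. (\<integral>\<^sup>+y. Q x y \<partial>lborel) \<partial>lborel) = 2 * simplex_integral (\<lambda>p. indicator {..t} (H p))"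
    unfolding Q_def by (rule nn_integral_square_tri_angles) measurable
  also have "ennreal (1 / pi\<^sup>2) * (2 * simplex_integral (\<lambda>p. indicator {..t} (H p)))
      = ennreal (2 / pi\<^sup>2) * simplex_integral (\<lambda>p. indicator {..t} (H p))"
  proof -
    have "ennreal (2 / pi\<^sup>2) = ennreal (1 / pi\<^sup>2) * ennreal 2"
      by (subst ennreal_mult[symmetric]) auto
    then show ?thesis
      by (simp add: mult.assoc)
  qed
  finally show ?thesis .
qed

lemma distributed_tri_angles:
  fixes H :: "real \<times> real \<Rightarrow> real"
  assumes "prob_space M"
    and J: "distributed M (lborel \<Otimes>\<^sub>M lborel) (\<lambda>\<omega>. (\<phi> \<omega>, \<psi> \<omega>))
      (\<lambda>(x, y). ennreal (indicator {0..pi} x / pi) * ennreal (indicator {0..pi} y / pi))"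
    and H_measurable [measurable]: "H \<in> borel_measurable (lborel \<Otimes>\<^sub>M lborel)"
    and same_law: "\<And>t. simplex_integral (\<lambda>p. indicator {..t} (H p))
      = simplex_integral (\<lambda>p. indicator {..t} (sine_ratio p))"
  shows "distributed M lborel (\<lambda>\<omega>. H (tri_angles (\<phi> \<omega>) (\<psi> \<omega>))) (\<lambda>z. ennreal (side_density z))"
proof -
  interpret prob_space M by fact
  have [measurable]: "(\<lambda>\<omega>. (\<phi> \<omega>, \<psi> \<omega>)) \<in> measurable M (lborel \<Otimes>\<^sub>M lborel)"
    using J by (simp add: distributed_def)
  define X where "X \<omega> = H (tri_angles (\<phi> \<omega>) (\<psi> \<omega>))" for \<omega>
  have X_measurable [measurable]: "X \<in> borel_measurable M"
    using measurable_comp[of "\<lambda>\<omega>. (\<phi> \<omega>, \<psi> \<omega>)" M "lborel \<Otimes>\<^sub>M lborel"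
        "\<lambda>p. H (tri_angles (fst p) (snd p))" borel]
    by (simp add: X_def[abs_def] o_def)
  have density_measurable [measurable]: "(\<lambda>z. ennreal (side_density z)) \<in> borel_measurable lborel"
    unfolding side_density_def by measurable
  have "distr M lborel X = density lborel (\<lambda>z. ennreal (side_density z))"
  proof (rule measure_eqI_atMost)
    fix t :: real
    interpret distr_prob: prob_space "distr M lborel X"
      by (rule prob_space_distr) simp
    show "emeasure (distr M lborel X) {..t} < \<infinity>"
      using distr_prob.emeasure_le_1[of "{..t}"] by (simp add: less_top[symmetric] top_unique)
    have "emeasure (distr M lborel X) {..t} = emeasure M (X -` {..t} \<inter> space M)"
      by (rule emeasure_distr) simp_all
    also have "X -` {..t} \<inter> space M = {\<omega> \<in> space M. X \<omega> \<le> t}"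
      by auto
    also have "emeasure M {\<omega> \<in> space M. X \<omega> \<le> t}
        = ennreal (2 / pi\<^sup>2) * simplex_integral (\<lambda>p. indicator {..t} (sine_ratio p))"
      unfolding X_def emeasure_tri_angles_le[OF J H_measurable] same_law ..
    also have "\<dots> = emeasure (density lborel (\<lambda>z. ennreal (side_density z))) {..t}"
      by (simp add: simplex_integral_sine_ratio_le_eq_side_cdf side_cdf_def emeasure_density)
    finally show "emeasure (distr M lborel X) {..t}
      = emeasure (density lborel (\<lambda>z. ennreal (side_density z))) {..t}" .
  qed simp_all
  then show ?thesis
    unfolding distributed_def X_def[symmetric] using X_measurable density_measurable by simp
qed

theorem mainTheorem18:
  fixes M :: "'a measure" and \<phi> \<psi> :: "'a \<Rightarrow> real"
  assumes "prob_space M"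
    and "distributed M lborel \<phi> (\<lambda>x. ennreal (indicator {0..pi} x / pi))"
    and "distributed M lborel \<psi> (\<lambda>x. ennreal (indicator {0..pi} x / pi))"
    and "prob_space.indep_var M borel \<phi> borel \<psi>"
  shows "distributed M lborel (\<lambda>\<omega>. side_a (\<phi> \<omega>) (\<psi> \<omega>)) (\<lambda>z. ennreal (side_density z))
       \<and> distributed M lborel (\<lambda>\<omega>. side_b (\<phi> \<omega>) (\<psi> \<omega>)) (\<lambda>z. ennreal (side_density z))
       \<and> distributed M lborel (\<lambda>\<omega>. side_a (\<phi> \<omega>) (\<psi> \<omega>) / side_b (\<phi> \<omega>) (\<psi> \<omega>))
           (\<lambda>z. ennreal (side_density z))
       \<and> distributed M lborel (\<lambda>\<omega>. side_b (\<phi> \<omega>) (\<psi> \<omega>) / side_a (\<phi> \<omega>) (\<psi> \<omega>))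
           (\<lambda>z. ennreal (side_density z))"
proof -
  have "prob_space.indep_var M lborel \<phi> lborel \<psi>"
    using assms(4) unfolding prob_space.indep_var_def[OF assms(1)] prob_space.indep_vars_def2[OF assms(1)]
    by (simp add: case_bool_if measurable_lborel2 sets_lborel)
  then have J: "distributed M (lborel \<Otimes>\<^sub>M lborel) (\<lambda>\<omega>. (\<phi> \<omega>, \<psi> \<omega>))
      (\<lambda>(x, y). ennreal (indicator {0..pi} x / pi) * ennreal (indicator {0..pi} y / pi))"
    by (rule prob_space.distributed_joint_indep[OF assms(1) sigma_finite_lborel sigma_finite_lborel assms(2,3)])
  have ratios_measurable:
    "(\<lambda>p. side_a_of_angles p / side_b_of_angles p) \<in> borel_measurable (lborel \<Otimes>\<^sub>M lborel)"
    "(\<lambda>p. side_b_of_angles p / side_a_of_angles p) \<in> borel_measurable (lborel \<Otimes>\<^sub>M lborel)"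
    by (intro borel_measurable_divide side_a_of_angles_measurable side_b_of_angles_measurable)+
  note distributed = distributed_tri_angles[OF assms(1) J]
  show ?thesis
    unfolding side_a_eq_side_a_of_angles side_b_eq_side_b_of_angles
    by (intro conjI distributed[OF side_a_of_angles_measurable simplex_integral_side_a_le]
        distributed[OF side_b_of_angles_measurable simplex_integral_side_b_le]
        distributed[OF ratios_measurable(1) simplex_integral_inverse_side_ratio_le]
        distributed[OF ratios_measurable(2) simplex_integral_side_ratio_le])
qed
end
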